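(* Let $\mathcal U$ be an unbalanced critical update family and let $K\subset\mathbb Z^2$ with $2\le|K|<\infty$ be such that $[K]$ is strongly connected. Then there is a partition $K=K_1\cup K_2$ into non-empty disjoint sets such that $[K_1]$, $[K_2]$ and $[K_1]\cup[K_2]$ are all strongly connected.
   Context: Update family $\mathcal U$: finite collection of finite subsets of $\mathbb Z^2\setminus\{0\}$; $A_0=A$, $A_{t+1}=A_t\cup\{x:x+X\subset A_t\text{ for some }X\in\mathcal U\}$, $[A]=\bigcup_tA_t$. (Unbalanced critical is as in the paper: $1\le\alpha(\mathcal U)<\infty$ and no closed semicircle of directions all have difficulty at most $\alpha(\mathcal U)$; only the choice of $\kappa$ depends on this.) $\nu=\max\{\|x-y\|:x,y\in X\cup\{0\},X\in\mathcal U\}$ and $\kappa=3\nu$. A set $S\subset\mathbb Z^2$ is strongly connected if it is connected in the graph on $\mathbb Z^2$ in which $x,y$ are adjacent iff $\|x-y\|_2\le\kappa$. *)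

theory Defs
  imports Complex_Main "HOL-Library.Extended_Nat"
begin

type_synonym pt = "int \<times> int"

definition update_family :: "pt set set \<Rightarrow> bool" where
  "update_family U \<longleftrightarrow> finite U \<and> (\<forall>X\<in>U. finite X \<and> (0,0) \<notin> X)"

definition padd :: "pt \<Rightarrow> pt \<Rightarrow> pt" where
  "padd x y = (fst x + fst y, snd x + snd y)"

definition bp_step :: "pt set set \<Rightarrow> pt set \<Rightarrow> pt set" where
  "bp_step U A = A \<union> {x. \<exists>X\<in>U. padd x ` X \<subseteq> A}"

definition bp_closure :: "pt set set \<Rightarrow> pt set \<Rightarrow> pt set" where
  "bp_closure U A = (\<Union>t. (bp_step U ^^ t) A)"

text \<open>Directions u in S^1 are parametrised by angles: u = (cos th, sin th).\<close>
definition ip :: "pt \<Rightarrow> real \<Rightarrow> real" where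
  "ip x th = real_of_int (fst x) * cos th + real_of_int (snd x) * sin th"

definition halfplane :: "real \<Rightarrow> pt set" where
  "halfplane th = {x. ip x th < 0}"

definition stable_dir :: "pt set set \<Rightarrow> real \<Rightarrow> bool" where
  "stable_dir U th \<longleftrightarrow> bp_closure U (halfplane th) = halfplane th"

definition isolated_stable :: "pt set set \<Rightarrow> real \<Rightarrow> bool" where
  "isolated_stable U th \<longleftrightarrow> stable_dir U th \<and>
     (\<exists>e>0. \<forall>th'. 0 < \<bar>th' - th\<bar> \<and> \<bar>th' - th\<bar> < e \<longrightarrow> \<not> stable_dir U th')"

definition difficulty :: "pt set set \<Rightarrow> real \<Rightarrow> enat" where
  "difficulty U th =
     (if \<not> stable_dir U th then 0
      else if isolated_stable U th then
        Inf {enat (card Z) | Z. finite Z \<and>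
              infinite (bp_closure U (halfplane th \<union> Z) - halfplane th)}
      else \<infinity>)"

definition alpha :: "pt set set \<Rightarrow> enat" where
  "alpha U = (INF th. SUP th'\<in>{th<..<th + pi}. difficulty U th')"

definition unbalanced_critical :: "pt set set \<Rightarrow> bool" where
  "unbalanced_critical U \<longleftrightarrow> update_family U \<and> 1 \<le> alpha U \<and> alpha U < \<infinity> \<and>
     \<not> (\<exists>th. \<forall>th'\<in>{th..th + pi}. difficulty U th' \<le> alpha U)"

definition edist :: "pt \<Rightarrow> pt \<Rightarrow> real" where
  "edist x y = sqrt (real_of_int ((fst x - fst y)^2 + (snd x - snd y)^2))"

definition nu :: "pt set set \<Rightarrow> real" where
  "nu U = Max {edist x y | x y X. X \<in> U \<and> x \<in> insert (0,0) X \<and> y \<in> insert (0,0) X}"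

definition kappa :: "pt set set \<Rightarrow> real" where
  "kappa U = 3 * nu U"

definition strongly_connected :: "pt set set \<Rightarrow> pt set \<Rightarrow> bool" where
  "strongly_connected U S \<longleftrightarrow>
     (\<forall>x\<in>S. \<forall>y\<in>S. (x, y) \<in> {(a, b). a \<in> S \<and> b \<in> S \<and> edist a b \<le> kappa U}\<^sup>*)"

end

theory Submission
  imports Defs "HOL-Library.Disjoint_Sets"
begin

(* Start from the partition of K into singletons; the closure of a single
   point is strongly connected.  As long as the partition has at least two blocks, some
   two distinct blocks B, C have "linked" closures (they meet or come within distance
   kappa): otherwise the union of the closures of the blocks would be a union of
   pairwise far apart closed sets, hence itself closed, hence would contain [K]; but
   the strongly connected set [K] cannot jump between far apart sets, so it would lie
   in a single [B], contradicting that it contains a point of another block.  Merging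
   two linked blocks B, C keeps every closure strongly connected, because
   [B \<union> C] = [[B] \<union> [C]] and closures of strongly connected sets are strongly
   connected (each newly infected site lies within distance kappa of an already infected one).
   Merging until two blocks remain yields the required bipartition. *)

section \<open>Strong connectivity\<close>

definition kappa_edges :: "pt set set \<Rightarrow> pt set \<Rightarrow> (pt \<times> pt) set" where
  "kappa_edges U S = {(a, b). a \<in> S \<and> b \<in> S \<and> edist a b \<le> kappa U}"

lemma strongly_connected_iff:
  "strongly_connected U S \<longleftrightarrow> (\<forall>x\<in>S. \<forall>y\<in>S. (x, y) \<in> (kappa_edges U S)\<^sup>*)"
  unfolding strongly_connected_def kappa_edges_def by simp

lemma edist_sym: "edist a b = edist b a"
  unfolding edist_def by (simp add: power2_commute)

lemma edist_padd: "edist (padd x u) (padd x v) = edist u v"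
  unfolding edist_def padd_def by (simp add: algebra_simps)

lemma kappa_edges_mono: "S \<subseteq> T \<Longrightarrow> kappa_edges U S \<subseteq> kappa_edges U T"
  unfolding kappa_edges_def by auto

lemma kappa_paths_mono: "S \<subseteq> T \<Longrightarrow> (kappa_edges U S)\<^sup>* \<subseteq> (kappa_edges U T)\<^sup>*"
  by (rule rtrancl_mono, rule kappa_edges_mono)

lemma kappa_paths_sym: "(x, y) \<in> (kappa_edges U S)\<^sup>* \<Longrightarrow> (y, x) \<in> (kappa_edges U S)\<^sup>*"
proof -
  have "sym (kappa_edges U S)"
    unfolding kappa_edges_def sym_def using edist_sym by auto
  then show "(x, y) \<in> (kappa_edges U S)\<^sup>* \<Longrightarrow> (y, x) \<in> (kappa_edges U S)\<^sup>*"
    using sym_rtrancl unfolding sym_def by blast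
qed

text \<open>Any two points of a translate of a rule X \<union> {0} are within distance kappa;
  this is the only place where the definition of kappa enters.\<close>
lemma rule_points_close:
  assumes uf: "update_family U" and X: "X \<in> U"
    and u: "u \<in> insert (0,0) X" and v: "v \<in> insert (0,0) X"
  shows "edist (padd x u) (padd x v) \<le> kappa U"
proof -
  let ?D = "{edist x y | x y X. X \<in> U \<and> x \<in> insert (0,0) X \<and> y \<in> insert (0,0) X}"
  have "finite (\<Union>X\<in>U. insert (0,0) X \<times> insert (0,0) X)"
    using uf unfolding update_family_def by auto
  moreover have "?D \<subseteq> (\<lambda>p. edist (fst p) (snd p)) ` (\<Union>X\<in>U. insert (0,0) X \<times> insert (0,0) X)"
    by force
  ultimately have "finite ?D" by (rule finite_surj)
  moreover have "edist u v \<in> ?D" using X u v by blast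
  ultimately have le_nu: "edist u v \<le> nu U" unfolding nu_def by (rule Max_ge)
  moreover have "0 \<le> edist u v" unfolding edist_def by simp
  ultimately show ?thesis unfolding kappa_def edist_padd by linarith
qed

lemma strongly_connected_extend:
  assumes "S \<subseteq> T" "strongly_connected U S"
    and reach: "\<And>t. t \<in> T \<Longrightarrow> \<exists>s\<in>S. (t, s) \<in> (kappa_edges U T)\<^sup>*"
  shows "strongly_connected U T"
  unfolding strongly_connected_iff
proof (intro ballI)
  fix x y assume "x \<in> T" "y \<in> T"
  then obtain s1 s2 where s: "s1 \<in> S" "s2 \<in> S"
    and xs1: "(x, s1) \<in> (kappa_edges U T)\<^sup>*" and ys2: "(y, s2) \<in> (kappa_edges U T)\<^sup>*"
    using reach by blast
  have "(s1, s2) \<in> (kappa_edges U T)\<^sup>*"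
    using assms(2) s kappa_paths_mono[OF assms(1)] unfolding strongly_connected_iff by blast
  then show "(x, y) \<in> (kappa_edges U T)\<^sup>*"
    using xs1 kappa_paths_sym[OF ys2] by (meson rtrancl_trans)
qed

definition linked :: "pt set set \<Rightarrow> pt set \<Rightarrow> pt set \<Rightarrow> bool" where
  "linked U S T \<longleftrightarrow> S \<inter> T \<noteq> {} \<or> (\<exists>a\<in>S. \<exists>b\<in>T. edist a b \<le> kappa U)"

lemma strongly_connected_Un:
  assumes S: "strongly_connected U S" and T: "strongly_connected U T" and "linked U S T"
  shows "strongly_connected U (S \<union> T)"
proof (rule strongly_connected_extend[OF _ S])
  obtain a b where ab: "a \<in> S" "b \<in> T" and "a = b \<or> edist a b \<le> kappa U"
    using \<open>linked U S T\<close> unfolding linked_def by blast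
  then have ba: "(b, a) \<in> (kappa_edges U (S \<union> T))\<^sup>*"
    unfolding kappa_edges_def using edist_sym[of a b] by auto
  fix t assume "t \<in> S \<union> T"
  moreover have "t \<in> T \<Longrightarrow> (t, b) \<in> (kappa_edges U (S \<union> T))\<^sup>*"
    using T ab kappa_paths_mono[of T "S \<union> T"] unfolding strongly_connected_iff by blast
  ultimately show "\<exists>s\<in>S. (t, s) \<in> (kappa_edges U (S \<union> T))\<^sup>*"
    using ab ba by (meson Un_iff rtrancl.rtrancl_refl rtrancl_trans)
qed simp

section \<open>The closure operator\<close>

lemma bp_step_incl: "A \<subseteq> bp_step U A"
  unfolding bp_step_def by (rule Un_upper1)

lemma bp_step_mono: "A \<subseteq> B \<Longrightarrow> bp_step U A \<subseteq> bp_step U B"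
  unfolding bp_step_def by blast

lemma bp_iter_mono: "A \<subseteq> B \<Longrightarrow> (bp_step U ^^ n) A \<subseteq> (bp_step U ^^ n) B"
  by (induction n) (simp_all add: bp_step_mono)

lemma bp_iter_increasing: "i \<le> j \<Longrightarrow> (bp_step U ^^ i) A \<subseteq> (bp_step U ^^ j) A"
  by (rule lift_Suc_mono_le[of "\<lambda>t. (bp_step U ^^ t) A"]) (simp_all add: bp_step_incl)

lemma bp_closure_incl: "A \<subseteq> bp_closure U A"
  unfolding bp_closure_def by (metis UN_upper UNIV_I funpow_0)

lemma bp_closure_mono: "A \<subseteq> B \<Longrightarrow> bp_closure U A \<subseteq> bp_closure U B"
  unfolding bp_closure_def by (intro UN_mono) (simp_all add: bp_iter_mono)

lemma bp_closure_least:
  assumes closed: "bp_step U S \<subseteq> S" and "A \<subseteq> S"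
  shows "bp_closure U A \<subseteq> S"
proof -
  have "(bp_step U ^^ n) A \<subseteq> S" for n
  proof (induction n)
    case (Suc n)
    then have "bp_step U ((bp_step U ^^ n) A) \<subseteq> bp_step U S" by (rule bp_step_mono)
    then show ?case using closed by simp
  qed (simp add: \<open>A \<subseteq> S\<close>)
  then show ?thesis unfolding bp_closure_def by (simp add: UN_least)
qed

text \<open>Since the rules are finite, [A] is itself closed under one step.\<close>
lemma bp_closure_closed:
  assumes uf: "update_family U"
  shows "bp_step U (bp_closure U A) \<subseteq> bp_closure U A"
proof
  fix x assume "x \<in> bp_step U (bp_closure U A)"
  then consider "x \<in> bp_closure U A" | X where "X \<in> U" "padd x ` X \<subseteq> bp_closure U A"
    unfolding bp_step_def by blast
  then show "x \<in> bp_closure U A"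
  proof cases
    case 2
    have "finite (padd x ` X)" using uf 2(1) unfolding update_family_def by blast
    then obtain n where "padd x ` X \<subseteq> (\<Union>t<n. (bp_step U ^^ t) A)"
      using 2(2) unfolding bp_closure_def by (rule finite_countable_subset)
    moreover have "(\<Union>t<n. (bp_step U ^^ t) A) \<subseteq> (bp_step U ^^ n) A"
      by (intro UN_least bp_iter_increasing) simp
    ultimately have "padd x ` X \<subseteq> (bp_step U ^^ n) A" by blast
    then have "x \<in> (bp_step U ^^ Suc n) A" using 2(1) unfolding bp_step_def by auto
    then show ?thesis unfolding bp_closure_def by blast
  qed
qed

lemma bp_closure_Un:
  assumes "update_family U"
  shows "bp_closure U (A \<union> B) = bp_closure U (bp_closure U A \<union> bp_closure U B)"
proof
  show "bp_closure U (A \<union> B) \<subseteq> bp_closure U (bp_closure U A \<union> bp_closure U B)"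
    by (rule bp_closure_mono) (use bp_closure_incl in blast)
  have "bp_closure U A \<union> bp_closure U B \<subseteq> bp_closure U (A \<union> B)"
    by (simp add: bp_closure_mono)
  then show "bp_closure U (bp_closure U A \<union> bp_closure U B) \<subseteq> bp_closure U (A \<union> B)"
    by (rule bp_closure_least[OF bp_closure_closed[OF assms]])
qed

text \<open>An empty rule would infect everything at once, so no direction would be stable and
  alpha would vanish; hence unbalanced critical families have only non-empty rules.\<close>
lemma unbalanced_critical_no_empty_rule:
  assumes "unbalanced_critical U" shows "{} \<notin> U"
proof
  assume "{} \<in> U"
  then have "bp_step U A = UNIV" for A unfolding bp_step_def by auto
  then have "(bp_step U ^^ Suc 0) A = UNIV" for A by simp
  then have "bp_closure U A = UNIV" for A unfolding bp_closure_def by blast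
  moreover have "(0,0) \<notin> halfplane th" for th unfolding halfplane_def ip_def by simp
  ultimately have "\<not> stable_dir U th" for th unfolding stable_dir_def by (metis UNIV_I)
  then have "difficulty U th = 0" for th unfolding difficulty_def by simp
  then have "alpha U = 0" unfolding alpha_def by (simp add: bot_enat_def[symmetric])
  then show False using assms unfolding unbalanced_critical_def by simp
qed

text \<open>One step preserves strong connectivity: a newly infected site x has a rule X with
  x + X already infected, and x is within distance kappa of any point of x + X.\<close>
lemma strongly_connected_bp_step:
  assumes uf: "update_family U" and ne: "{} \<notin> U" and sc: "strongly_connected U A"
  shows "strongly_connected U (bp_step U A)"
proof (rule strongly_connected_extend[OF bp_step_incl sc])
  fix t assume t: "t \<in> bp_step U A"
  show "\<exists>s\<in>A. (t, s) \<in> (kappa_edges U (bp_step U A))\<^sup>*"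
  proof (cases "t \<in> A")
    case False
    then obtain X where X: "X \<in> U" "padd t ` X \<subseteq> A"
      using t unfolding bp_step_def by auto
    then obtain v where v: "v \<in> X" using ne by (metis ex_in_conv)
    have "edist t (padd t v) \<le> kappa U"
      using rule_points_close[OF uf X(1), of "(0,0)" v t] v by (simp add: padd_def)
    moreover have "padd t v \<in> A" using X v by blast
    ultimately show ?thesis
      using t bp_step_incl[of A U] unfolding kappa_edges_def by blast
  qed blast
qed

text \<open>Hence closures of strongly connected sets are strongly connected: any two points
  of [A] already lie in a common A_t.\<close>
lemma strongly_connected_bp_closure:
  assumes uf: "update_family U" and ne: "{} \<notin> U" and sc: "strongly_connected U A"
  shows "strongly_connected U (bp_closure U A)"
  unfolding strongly_connected_iff
proof (intro ballI)
  have sc_iter: "strongly_connected U ((bp_step U ^^ n) A)" for n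
    by (induction n) (simp_all add: sc strongly_connected_bp_step[OF uf ne])
  fix x y assume "x \<in> bp_closure U A" "y \<in> bp_closure U A"
  then obtain i j where "x \<in> (bp_step U ^^ i) A" "y \<in> (bp_step U ^^ j) A"
    unfolding bp_closure_def by blast
  then have "x \<in> (bp_step U ^^ max i j) A" "y \<in> (bp_step U ^^ max i j) A"
    using bp_iter_increasing[of i "max i j" U A] bp_iter_increasing[of j "max i j" U A] by auto
  then have "(x, y) \<in> (kappa_edges U ((bp_step U ^^ max i j) A))\<^sup>*"
    using sc_iter unfolding strongly_connected_iff by blast
  moreover have "(bp_step U ^^ max i j) A \<subseteq> bp_closure U A" unfolding bp_closure_def by blast
  ultimately show "(x, y) \<in> (kappa_edges U (bp_closure U A))\<^sup>*"
    using kappa_paths_mono by blast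
qed

text \<open>A union of closed sets that are pairwise not linked is closed: all sites of a
  translated rule x + X lie within distance kappa of each other, so they lie in one
  of the sets, which then contains x.\<close>
lemma unlinked_Union_closed:
  assumes uf: "update_family U" and ne: "{} \<notin> U"
    and closed: "\<forall>i\<in>I. bp_step U (S i) \<subseteq> S i"
    and unlinked: "\<forall>i\<in>I. \<forall>j\<in>I. i \<noteq> j \<longrightarrow> \<not> linked U (S i) (S j)"
  shows "bp_step U (\<Union>i\<in>I. S i) \<subseteq> (\<Union>i\<in>I. S i)"
proof
  fix x assume "x \<in> bp_step U (\<Union>i\<in>I. S i)"
  then consider "x \<in> (\<Union>i\<in>I. S i)" | X where "X \<in> U" "padd x ` X \<subseteq> (\<Union>i\<in>I. S i)"
    unfolding bp_step_def by auto
  then show "x \<in> (\<Union>i\<in>I. S i)"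
  proof cases
    case 2
    obtain v0 where v0: "v0 \<in> X" using ne 2(1) by (metis ex_in_conv)
    then obtain i where i: "i \<in> I" "padd x v0 \<in> S i" using 2(2) by blast
    have "padd x v \<in> S i" if v: "v \<in> X" for v
    proof -
      obtain j where j: "j \<in> I" "padd x v \<in> S j" using 2(2) v by blast
      have "edist (padd x v0) (padd x v) \<le> kappa U"
        using rule_points_close[OF uf 2(1)] v v0 by blast
      then have "linked U (S i) (S j)" using i j unfolding linked_def by blast
      then have "j = i" using unlinked i j by metis
      then show ?thesis using j by simp
    qed
    then have "x \<in> bp_step U (S i)" using 2(1) unfolding bp_step_def by blast
    then show ?thesis using closed i by blast
  qed
qed

text \<open>A strongly connected set covered by pairwise unlinked sets lies inside the one
  member it meets: a kappa-path cannot pass between unlinked sets.\<close>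
lemma strongly_connected_in_unlinked_Union:
  assumes sc: "strongly_connected U T" and cover: "T \<subseteq> (\<Union>i\<in>I. S i)"
    and unlinked: "\<forall>i\<in>I. \<forall>j\<in>I. i \<noteq> j \<longrightarrow> \<not> linked U (S i) (S j)"
    and i: "i \<in> I" and x: "x \<in> T" "x \<in> S i"
  shows "T \<subseteq> S i"
proof
  fix y assume "y \<in> T"
  then have "(x, y) \<in> (kappa_edges U T)\<^sup>*" using sc x unfolding strongly_connected_iff by blast
  then show "y \<in> S i"
  proof (induction rule: rtrancl_induct)
    case (step y z)
    then have "z \<in> T" "edist y z \<le> kappa U" unfolding kappa_edges_def by auto
    then obtain j where j: "j \<in> I" "z \<in> S j" using cover by blast
    then have "linked U (S i) (S j)"
      using step.IH \<open>edist y z \<le> kappa U\<close> unfolding linked_def by blast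
    then have "j = i" using unlinked i j by metis
    then show ?case using j by simp
  qed (use x in blast)
qed

section \<open>Linking and merging blocks of a partition\<close>

lemma exists_linked_blocks:
  assumes uf: "update_family U" and ne: "{} \<notin> U"
    and scK: "strongly_connected U (bp_closure U K)"
    and P: "partition_on K P" and BC: "B \<in> P" "C \<in> P" "B \<noteq> C"
  shows "\<exists>B\<in>P. \<exists>C\<in>P. B \<noteq> C \<and> linked U (bp_closure U B) (bp_closure U C)"
proof (rule ccontr)
  assume "\<not> ?thesis"
  then have unlinked: "\<forall>B\<in>P. \<forall>C\<in>P. B \<noteq> C \<longrightarrow> \<not> linked U (bp_closure U B) (bp_closure U C)"
    by blast
  have "bp_closure U K \<subseteq> (\<Union>D\<in>P. bp_closure U D)"
  proof (rule bp_closure_least)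
    show "bp_step U (\<Union>D\<in>P. bp_closure U D) \<subseteq> (\<Union>D\<in>P. bp_closure U D)"
      using unlinked_Union_closed[OF uf ne _ unlinked] bp_closure_closed[OF uf] by blast
    show "K \<subseteq> (\<Union>D\<in>P. bp_closure U D)"
      using partition_onD1[OF P] bp_closure_incl by blast
  qed
  moreover obtain b c where bc: "b \<in> B" "c \<in> C"
    using partition_onD3[OF P] BC by (metis all_not_in_conv)
  moreover have K: "B \<subseteq> bp_closure U K" "C \<subseteq> bp_closure U K"
    using partition_onD1[OF P] BC bp_closure_incl by blast+
  ultimately have "bp_closure U K \<subseteq> bp_closure U B"
    using strongly_connected_in_unlinked_Union[OF scK _ unlinked BC(1)] bp_closure_incl by blast
  then have "c \<in> bp_closure U B \<inter> bp_closure U C" using bc K bp_closure_incl by blast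
  then show False using unlinked BC unfolding linked_def by blast
qed

lemma partition_on_merge:
  assumes P: "partition_on K P" and "finite P" and BC: "B \<in> P" "C \<in> P" "B \<noteq> C"
  shows "partition_on K (insert (B \<union> C) (P - {B, C}))"
    and "card (insert (B \<union> C) (P - {B, C})) = card P - 1"
proof -
  have disj: "disjoint P" "{} \<notin> P" using P by (simp_all add: partition_on_def)
  have rest_disjoint: "D \<inter> (B \<union> C) = {}" if "D \<in> P - {B, C}" for D
    using disj(1) that BC unfolding disjoint_def by blast
  then show "partition_on K (insert (B \<union> C) (P - {B, C}))"
    using rest_disjoint P BC unfolding partition_on_def disjoint_def by auto
  moreover have "B \<union> C \<notin> P - {B, C}"
    using rest_disjoint disj(2) BC(1) by blast
  moreover have "card {B, C} \<le> card P" using assms(2) BC by (intro card_mono) auto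
  ultimately show "card (insert (B \<union> C) (P - {B, C})) = card P - 1"
    using assms(2) BC by (simp add: card_Diff_subset)
qed

lemma strongly_connected_bipartition:
  assumes uf: "update_family U" and ne: "{} \<notin> U"
    and scK: "strongly_connected U (bp_closure U K)"
    and "partition_on K P" "finite P" "2 \<le> card P"
    and "\<forall>B\<in>P. strongly_connected U (bp_closure U B)"
  shows "\<exists>B C. partition_on K {B, C} \<and> B \<noteq> C \<and>
           strongly_connected U (bp_closure U B) \<and> strongly_connected U (bp_closure U C) \<and>
           strongly_connected U (bp_closure U B \<union> bp_closure U C)"
  using assms(4-)
proof (induction "card P" arbitrary: P rule: less_induct)
  case less
  note P = less.prems(1) and fin = less.prems(2) and card2 = less.prems(3)
    and scP = less.prems(4)
  have "\<not> card P \<le> Suc 0" using card2 by simp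
  then obtain B0 C0 where "B0 \<in> P" "C0 \<in> P" "B0 \<noteq> C0"
    using card_le_Suc0_iff_eq[OF fin] by blast
  then obtain B C where BC: "B \<in> P" "C \<in> P" "B \<noteq> C"
    and link: "linked U (bp_closure U B) (bp_closure U C)"
    using exists_linked_blocks[OF uf ne scK P] by blast
  have scBC: "strongly_connected U (bp_closure U B \<union> bp_closure U C)"
    using strongly_connected_Un scP BC link by blast
  show ?case
  proof (cases "card P = 2")
    case True
    have "{B, C} = P"
      by (rule card_subset_eq[OF fin]) (use BC True in auto)
    then show ?thesis using P BC scP scBC by auto
  next
    case False
    let ?P' = "insert (B \<union> C) (P - {B, C})"
    have "strongly_connected U (bp_closure U (B \<union> C))"
      using bp_closure_Un[OF uf, of B C] strongly_connected_bp_closure[OF uf ne scBC] by simp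
    then have sc': "\<forall>D\<in>?P'. strongly_connected U (bp_closure U D)" using scP by simp
    have card': "card ?P' < card P" "2 \<le> card ?P'"
      using partition_on_merge(2)[OF P fin BC] card2 False by simp_all
    have "finite ?P'" using fin by simp
    then show ?thesis
      using less.hyps[OF card'(1) partition_on_merge(1)[OF P fin BC] _ card'(2) sc'] by blast
  qed
qed

theorem mainTheorem12:
  fixes U :: "pt set set" and K :: "pt set"
  assumes "unbalanced_critical U"
    and "finite K" and "2 \<le> card K"
    and "strongly_connected U (bp_closure U K)"
  shows "\<exists>K1 K2. K1 \<union> K2 = K \<and> K1 \<inter> K2 = {} \<and> K1 \<noteq> {} \<and> K2 \<noteq> {} \<and>
           strongly_connected U (bp_closure U K1) \<and>
           strongly_connected U (bp_closure U K2) \<and>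
           strongly_connected U (bp_closure U K1 \<union> bp_closure U K2)"
proof -
  have uf: "update_family U" using assms(1) unfolding unbalanced_critical_def by blast
  have ne: "{} \<notin> U" using unbalanced_critical_no_empty_rule[OF assms(1)] .
  let ?P = "(\<lambda>x. {x}) ` K"
  have "finite ?P" "2 \<le> card ?P" using assms(2,3) by (simp_all add: card_image)
  moreover have "\<forall>B\<in>?P. strongly_connected U (bp_closure U B)"
    using strongly_connected_bp_closure[OF uf ne] by (simp add: strongly_connected_iff)
  ultimately obtain B C where P: "partition_on K {B, C}" and "B \<noteq> C"
    and sc: "strongly_connected U (bp_closure U B)" "strongly_connected U (bp_closure U C)"
            "strongly_connected U (bp_closure U B \<union> bp_closure U C)"
    using strongly_connected_bipartition[OF uf ne assms(4) partition_on_singletons] by blast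
  have "B \<union> C = K" using partition_onD1[OF P] by simp
  moreover have "B \<inter> C = {}"
    using partition_onD2[OF P] \<open>B \<noteq> C\<close> unfolding disjoint_def by blast
  moreover have "B \<noteq> {}" "C \<noteq> {}" using partition_onD3[OF P] by auto
  ultimately show ?thesis using sc by blast
qed

end
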